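(* Let $k\ge1$ and let $\alpha_1,\dots,\alpha_{k+1}>0$ be real; put $\beta_j=\alpha_{j+1}+\alpha_{j+2}+\dots+\alpha_k+\alpha_{k+1}$ for $j=1,\dots,k$. Let $(x_1,\dots,x_k)$ have the type-1 Dirichlet density $$f_1(x_1,\dots,x_k)=\frac{\Gamma(\alpha_1+\dots+\alpha_{k+1})}{\Gamma(\alpha_1)\cdots\Gamma(\alpha_{k+1})}x_1^{\alpha_1-1}\cdots x_k^{\alpha_k-1}(1-x_1-\dots-x_k)^{\alpha_{k+1}-1}$$ on $\{0<x_j<1,\ 0<x_1+\dots+x_k<1\}$ and $0$ elsewhere. Let $(v_1,\dots,v_k)$ be a vector of positive real random variables with an arbitrary joint density $f(v_1,\dots,v_k)$ on $(0,\infty)^k$, independent of $(x_1,\dots,x_k)$. Let $y_j=\dfrac{x_j}{1-x_1-\dots-x_{j-1}}$ (with denominator $1$ for $j=1$), let $u_j=v_j/y_j$, $j=1,\dots,k$, and let $g(u_1,\dots,u_k)$ be the joint density of $(u_1,\dots,u_k)$. Then, for (almost every) $(u_1,\dots,u_k)\in(0,\infty)^k$, $$I_{u_j,j=1,\dots,k}^{(\alpha_j,\beta_j),j=1,\dots,k}f(u_1,\dots,u_k)=\Big\{\prod_{j=1}^k\frac{\Gamma(\alpha_j)}{\Gamma(\alpha_j+\beta_j)}\Big\}g(u_1,\dots,u_k).$$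
   Context: The multivariable Kober fractional integral operator of the first kind is defined, for parameters $\zeta_j$ and $\alpha_j>0$, by $$I_{u_j,j=1,\dots,k}^{(\zeta_j,\alpha_j),j=1,\dots,k}f(u_1,\dots,u_k)=\Big\{\prod_{j=1}^k\frac{u_j^{-\zeta_j-\alpha_j}}{\Gamma(\alpha_j)}\Big\}\int_{0}^{u_1}\cdots\int_{0}^{u_k}\Big\{\prod_{j=1}^k(u_j-v_j)^{\alpha_j-1}v_j^{\zeta_j}\Big\}f(v_1,\dots,v_k)\,dv_1\cdots dv_k;$$ here it is applied with $\zeta_j=\alpha_j$ and $\alpha_j$ replaced by $\beta_j$. *)

theory Defs
  imports "HOL-Probability.Probability"
begin

abbreviation lebk :: "nat \<Rightarrow> (nat \<Rightarrow> real) measure" where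
  "lebk k \<equiv> PiM {1..k} (\<lambda>_. lborel)"

definition dirichlet1_density :: "nat \<Rightarrow> (nat \<Rightarrow> real) \<Rightarrow> (nat \<Rightarrow> real) \<Rightarrow> real" where
  "dirichlet1_density k \<alpha> x =
     (if (\<forall>j\<in>{1..k}. 0 < x j \<and> x j < 1) \<and> 0 < (\<Sum>j=1..k. x j) \<and> (\<Sum>j=1..k. x j) < 1
      then Gamma (\<Sum>j=1..k+1. \<alpha> j) / (\<Prod>j=1..k+1. Gamma (\<alpha> j))
           * (\<Prod>j=1..k. x j powr (\<alpha> j - 1))
           * (1 - (\<Sum>j=1..k. x j)) powr (\<alpha> (k+1) - 1)
      else 0)"

definition dir_y :: "(nat \<Rightarrow> real) \<Rightarrow> nat \<Rightarrow> real" where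
  "dir_y x j = x j / (1 - (\<Sum>i\<in>{1..<j}. x i))"

definition dir_beta :: "nat \<Rightarrow> (nat \<Rightarrow> real) \<Rightarrow> nat \<Rightarrow> real" where
  "dir_beta k \<alpha> j = (\<Sum>i=j+1..k+1. \<alpha> i)"

definition kober1 :: "nat \<Rightarrow> (nat \<Rightarrow> real) \<Rightarrow> (nat \<Rightarrow> real) \<Rightarrow> ((nat \<Rightarrow> real) \<Rightarrow> real)
    \<Rightarrow> (nat \<Rightarrow> real) \<Rightarrow> real" where
  "kober1 k \<zeta> a f u =
     (\<Prod>j=1..k. u j powr (- \<zeta> j - a j) / Gamma (a j)) *
     set_lebesgue_integral (lebk k)
       {v \<in> space (lebk k). \<forall>j\<in>{1..k}. 0 < v j \<and> v j < u j}
       (\<lambda>v. (\<Prod>j=1..k. (u j - v j) powr (a j - 1) * v j powr \<zeta> j) * f v)"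

end

theory Submission
  imports Defs
begin

text \<open>
  By independence, \<open>U = V / y(X)\<close> has the density
  \<open>G(u) = \<integral> f\<^sub>1(x) (\<Prod>\<^sub>j y_j(x)) f(y(x) u) dx\<close> (condition on \<open>X\<close> and rescale \<open>V\<close>),
  so \<open>g = G\<close> almost everywhere. Under the Dirichlet law the stick-breaking variables
  \<open>y_1, ..., y_k\<close> are independent with \<open>y_j \<sim> Beta(\<alpha>_j, \<beta>_j)\<close>: the substitution
  \<open>x_(k+1) = (1 - x_1 - ... - x_k) s\<close> splits off a \<open>Beta(\<alpha>_(k+1), \<alpha>_(k+2))\<close> factor and
  leaves a \<open>k\<close>-dimensional Dirichlet kernel whose last two parameters are merged, so
  induction on \<open>k\<close> applies. The change of variables \<open>v_j = y_j u_j\<close> then turns \<open>G(u)\<close> into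
  \<open>\<Prod>\<^sub>j u_j^(-\<alpha>_j-\<beta>_j)\<close> times the integral of \<open>\<Prod>\<^sub>j (u_j - v_j)^(\<beta>_j-1) v_j^\<alpha>_j f(v)\<close>
  over \<open>0 < v < u\<close>, which is the Kober integral up to the factor \<open>\<Prod>\<^sub>j \<Gamma>(\<beta>_j)\<close>.
  The Gamma constants telescope because \<open>\<alpha>_j + \<beta>_j = \<beta>_(j-1)\<close>.
\<close>

section \<open>Coordinatewise scaling of Lebesgue measure on a finite product\<close>

lemma nn_integral_PiM_lborel_scale:
  fixes c :: "'i \<Rightarrow> real" and F :: "('i \<Rightarrow> real) \<Rightarrow> ennreal"
  assumes "finite I" and "\<And>i. i \<in> I \<Longrightarrow> 0 < c i"
    and "F \<in> borel_measurable (PiM I (\<lambda>_. lborel))"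
  shows "(\<integral>\<^sup>+v. F v \<partial>PiM I (\<lambda>_. lborel))
       = ennreal (\<Prod>i\<in>I. c i) * (\<integral>\<^sup>+u. F (\<lambda>i\<in>I. c i * u i) \<partial>PiM I (\<lambda>_. lborel))"
  using assms
proof (induction I arbitrary: F rule: finite_induct)
  case empty
  then show ?case by (simp add: PiM_empty nn_integral_count_space_finite)
next
  case (insert i I)
  note [measurable] = insert.prems(2)
  interpret product_sigma_finite "\<lambda>_. lborel :: real measure" by standard
  have ci: "0 < c i" using insert.prems by simp
  have "(\<lambda>p. (fst p)(i := c i * snd p))
      \<in> measurable (PiM I (\<lambda>_. lborel) \<Otimes>\<^sub>M lborel) (PiM (insert i I) (\<lambda>_. lborel))"
    by (rule measurable_fun_upd[where J = I]) auto
  from measurable_compose[OF this insert.prems(2)]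
  have [measurable]: "(\<lambda>(x, y). F (x(i := c i * y))) \<in> borel_measurable (PiM I (\<lambda>_. lborel) \<Otimes>\<^sub>M lborel)"
    by (simp add: case_prod_beta')
  from lborel.borel_measurable_nn_integral[OF this]
  have inner_measurable[measurable]: "(\<lambda>x. \<integral>\<^sup>+y. F (x(i := c i * y)) \<partial>lborel) \<in> borel_measurable (PiM I (\<lambda>_. lborel))"
    by simp
  have "(\<integral>\<^sup>+v. F v \<partial>PiM (insert i I) (\<lambda>_. lborel))
      = (\<integral>\<^sup>+x. \<integral>\<^sup>+y. F (x(i := y)) \<partial>lborel \<partial>PiM I (\<lambda>_. lborel))"
    using insert.hyps by (intro product_nn_integral_insert) auto
  also have "\<dots> = (\<integral>\<^sup>+x. ennreal (c i) * (\<integral>\<^sup>+y. F (x(i := c i * y)) \<partial>lborel) \<partial>PiM I (\<lambda>_. lborel))"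
    using ci insert.hyps
    by (intro nn_integral_cong, subst nn_integral_real_affine[where c = "c i" and t = 0]) auto
  also have "\<dots> = ennreal (c i) * (\<integral>\<^sup>+x. \<integral>\<^sup>+y. F (x(i := c i * y)) \<partial>lborel \<partial>PiM I (\<lambda>_. lborel))"
    by (rule nn_integral_cmult) measurable
  also have "(\<integral>\<^sup>+x. \<integral>\<^sup>+y. F (x(i := c i * y)) \<partial>lborel \<partial>PiM I (\<lambda>_. lborel))
      = ennreal (\<Prod>j\<in>I. c j) * (\<integral>\<^sup>+u. \<integral>\<^sup>+y. F ((\<lambda>j\<in>I. c j * u j)(i := c i * y)) \<partial>lborel \<partial>PiM I (\<lambda>_. lborel))"
    using insert.prems by (intro insert.IH[OF _ inner_measurable]) auto
  also have "(\<integral>\<^sup>+u. \<integral>\<^sup>+y. F ((\<lambda>j\<in>I. c j * u j)(i := c i * y)) \<partial>lborel \<partial>PiM I (\<lambda>_. lborel))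
      = (\<integral>\<^sup>+u. \<integral>\<^sup>+y. F (\<lambda>j\<in>insert i I. c j * (u(i := y)) j) \<partial>lborel \<partial>PiM I (\<lambda>_. lborel))"
    using insert.hyps by (intro nn_integral_cong arg_cong[where f = F] ext) auto
  also have "\<dots> = (\<integral>\<^sup>+u. F (\<lambda>j\<in>insert i I. c j * u j) \<partial>PiM (insert i I) (\<lambda>_. lborel))"
    using insert.hyps by (intro product_nn_integral_insert[symmetric]) auto
  finally show ?case
    using insert.hyps insert.prems
    by (simp add: ennreal_mult mult.assoc prod_nonneg less_imp_le restrict_def)
qed

lemma nn_integral_PiM_lborel_divide:
  fixes y :: "'i \<Rightarrow> real" and F :: "('i \<Rightarrow> real) \<Rightarrow> ennreal"
  assumes "finite I" and "\<And>i. i \<in> I \<Longrightarrow> 0 < y i"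
    and [measurable]: "F \<in> borel_measurable (PiM I (\<lambda>_. lborel))" "A \<in> sets (PiM I (\<lambda>_. lborel))"
  shows "(\<integral>\<^sup>+v. F v * indicator A (restrict (\<lambda>i. v i / y i) I) \<partial>PiM I (\<lambda>_. lborel))
       = ennreal (\<Prod>i\<in>I. y i) * (\<integral>\<^sup>+u. F (restrict (\<lambda>i. y i * u i) I) * indicator A u \<partial>PiM I (\<lambda>_. lborel))"
proof -
  have inverse: "restrict (\<lambda>i. restrict (\<lambda>i. y i * u i) I i / y i) I = u"
    if "u \<in> space (PiM I (\<lambda>_. lborel))" for u
  proof
    fix i
    show "restrict (\<lambda>i. restrict (\<lambda>i. y i * u i) I i / y i) I i = u i"
      using that assms(2)[of i] by (cases "i \<in> I") (auto simp: space_PiM PiE_def extensional_def)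
  qed
  have "(\<integral>\<^sup>+v. F v * indicator A (restrict (\<lambda>i. v i / y i) I) \<partial>PiM I (\<lambda>_. lborel))
      = ennreal (\<Prod>i\<in>I. y i) * (\<integral>\<^sup>+u. F (restrict (\<lambda>i. y i * u i) I)
          * indicator A (restrict (\<lambda>i. restrict (\<lambda>i. y i * u i) I i / y i) I) \<partial>PiM I (\<lambda>_. lborel))"
    using assms by (intro nn_integral_PiM_lborel_scale) auto
  also have "\<dots> = ennreal (\<Prod>i\<in>I. y i) * (\<integral>\<^sup>+u. F (restrict (\<lambda>i. y i * u i) I) * indicator A u \<partial>PiM I (\<lambda>_. lborel))"
    by (intro arg_cong[where f = "(*) _"] nn_integral_cong) (simp only: inverse)
  finally show ?thesis .
qed

section \<open>The density of a quotient of independent random vectors\<close>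

lemma measurable_restrict_mult:
  fixes Y :: "'b \<Rightarrow> 'i \<Rightarrow> real"
  assumes "\<And>i. i \<in> I \<Longrightarrow> (\<lambda>x. Y x i) \<in> borel_measurable S"
  shows "(\<lambda>p. restrict (\<lambda>i. Y (fst p) i * snd p i) I)
           \<in> measurable (S \<Otimes>\<^sub>M PiM I (\<lambda>_. lborel)) (PiM I (\<lambda>_. lborel))"
proof (rule measurable_restrict)
  fix i assume "i \<in> I"
  note assms[OF this, measurable]
  show "(\<lambda>p. Y (fst p) i * snd p i) \<in> measurable (S \<Otimes>\<^sub>M PiM I (\<lambda>_. lborel)) lborel"
    using \<open>i \<in> I\<close> by measurable
qed

lemma measurable_restrict_divide:
  fixes Y :: "'b \<Rightarrow> 'i \<Rightarrow> real"
  assumes "\<And>i. i \<in> I \<Longrightarrow> (\<lambda>x. Y x i) \<in> borel_measurable S"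
  shows "(\<lambda>p. restrict (\<lambda>i. snd p i / Y (fst p) i) I)
           \<in> measurable (S \<Otimes>\<^sub>M PiM I (\<lambda>_. lborel)) (PiM I (\<lambda>_. lborel))"
proof (rule measurable_restrict)
  fix i assume "i \<in> I"
  note assms[OF this, measurable]
  show "(\<lambda>p. snd p i / Y (fst p) i) \<in> measurable (S \<Otimes>\<^sub>M PiM I (\<lambda>_. lborel)) lborel"
    using \<open>i \<in> I\<close> by measurable
qed

lemma borel_measurable_quotient_density:
  fixes Y :: "'b \<Rightarrow> 'i \<Rightarrow> real"
  assumes "sigma_finite_measure S"
    and [measurable]: "P \<in> borel_measurable S" "Q \<in> borel_measurable (PiM I (\<lambda>_. lborel))"
    and Y: "\<And>i. i \<in> I \<Longrightarrow> (\<lambda>x. Y x i) \<in> borel_measurable S"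
  shows "(\<lambda>(x, u). P x * ennreal (\<Prod>i\<in>I. Y x i) * Q (restrict (\<lambda>i. Y x i * u i) I))
           \<in> borel_measurable (S \<Otimes>\<^sub>M PiM I (\<lambda>_. lborel))" (is "?K \<in> _")
    and "(\<lambda>u. \<integral>\<^sup>+x. P x * ennreal (\<Prod>i\<in>I. Y x i) * Q (restrict (\<lambda>i. Y x i * u i) I) \<partial>S)
           \<in> borel_measurable (PiM I (\<lambda>_. lborel))"
proof -
  interpret S: sigma_finite_measure S by fact
  have [measurable]: "(\<lambda>x. \<Prod>i\<in>I. Y x i) \<in> borel_measurable S"
    using Y by (rule borel_measurable_prod)
  have [measurable]: "(\<lambda>p. Q (restrict (\<lambda>i. Y (fst p) i * snd p i) I)) \<in> borel_measurable (S \<Otimes>\<^sub>M PiM I (\<lambda>_. lborel))"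
    by (rule measurable_compose[OF measurable_restrict_mult[OF Y]]) measurable
  show K: "?K \<in> borel_measurable (S \<Otimes>\<^sub>M PiM I (\<lambda>_. lborel))"
    unfolding case_prod_beta' by measurable
  show "(\<lambda>u. \<integral>\<^sup>+x. P x * ennreal (\<Prod>i\<in>I. Y x i) * Q (restrict (\<lambda>i. Y x i * u i) I) \<partial>S)
      \<in> borel_measurable (PiM I (\<lambda>_. lborel))"
    using S.borel_measurable_nn_integral[of "\<lambda>u x. ?K (x, u)" "PiM I (\<lambda>_. lborel)"] K
    by (simp add: measurable_pair_swap_iff[of _ S] case_prod_beta')
qed

lemma distr_density_quotient:
  fixes Y :: "'b \<Rightarrow> 'i \<Rightarrow> real"
  assumes "finite I" and "sigma_finite_measure S"
    and [measurable]: "P \<in> borel_measurable S" "Q \<in> borel_measurable (PiM I (\<lambda>_. lborel))"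
    and Y: "\<And>i. i \<in> I \<Longrightarrow> (\<lambda>x. Y x i) \<in> borel_measurable S"
    and Y_pos: "\<And>x i. x \<in> space S \<Longrightarrow> P x \<noteq> 0 \<Longrightarrow> i \<in> I \<Longrightarrow> 0 < Y x i"
  shows "distr (density (S \<Otimes>\<^sub>M PiM I (\<lambda>_. lborel)) (\<lambda>(x, v). P x * Q v)) (PiM I (\<lambda>_. lborel))
           (\<lambda>(x, v). restrict (\<lambda>i. v i / Y x i) I)
       = density (PiM I (\<lambda>_. lborel))
           (\<lambda>u. \<integral>\<^sup>+x. P x * ennreal (\<Prod>i\<in>I. Y x i) * Q (restrict (\<lambda>i. Y x i * u i) I) \<partial>S)"
    (is "distr ?D ?L ?\<phi> = density ?L ?G")
proof -
  interpret PS: product_sigma_finite "\<lambda>_. lborel :: real measure" by standard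
  interpret S: sigma_finite_measure S by fact
  interpret L: sigma_finite_measure ?L
    using \<open>finite I\<close> by (rule PS.sigma_finite)
  interpret SL: pair_sigma_finite S ?L ..
  define K where "K = (\<lambda>(x, u). P x * ennreal (\<Prod>i\<in>I. Y x i) * Q (restrict (\<lambda>i. Y x i * u i) I))"
  have [measurable]: "?\<phi> \<in> measurable (S \<Otimes>\<^sub>M ?L) ?L"
    using measurable_restrict_divide[OF Y] by (simp add: case_prod_beta')
  have [measurable]: "K \<in> borel_measurable (S \<Otimes>\<^sub>M ?L)" "?G \<in> borel_measurable ?L"
    unfolding K_def using borel_measurable_quotient_density[OF assms(2-4) Y] by simp_all
  have fibre: "(\<integral>\<^sup>+v. P x * Q v * indicator A (?\<phi> (x, v)) \<partial>?L) = (\<integral>\<^sup>+u. K (x, u) * indicator A u \<partial>?L)"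
    if x: "x \<in> space S" and A: "A \<in> sets ?L" for x A
  proof (cases "P x = 0")
    case False
    have [measurable]: "(\<lambda>u. restrict (\<lambda>i. Y x i * u i) I) \<in> measurable ?L ?L"
      by (rule measurable_restrict) auto
    have "(\<integral>\<^sup>+v. P x * Q v * indicator A (?\<phi> (x, v)) \<partial>?L)
        = P x * (\<integral>\<^sup>+v. Q v * indicator A (restrict (\<lambda>i. v i / Y x i) I) \<partial>?L)"
      using x A by (subst nn_integral_cmult[symmetric]) (auto simp: mult.assoc)
    also have "\<dots> = P x * (ennreal (\<Prod>i\<in>I. Y x i) * (\<integral>\<^sup>+u. Q (restrict (\<lambda>i. Y x i * u i) I) * indicator A u \<partial>?L))"
      using A x False Y_pos \<open>finite I\<close> by (subst nn_integral_PiM_lborel_divide) auto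
    also have "\<dots> = (\<integral>\<^sup>+u. K (x, u) * indicator A u \<partial>?L)"
      using A by (simp add: K_def nn_integral_cmult mult.assoc)
    finally show ?thesis .
  qed (simp add: K_def)
  show ?thesis
  proof (rule measure_eqI)
    fix A assume "A \<in> sets (distr ?D ?L ?\<phi>)"
    then have A [measurable]: "A \<in> sets ?L" by simp
    have "emeasure (distr ?D ?L ?\<phi>) A = (\<integral>\<^sup>+p. (case p of (x, v) \<Rightarrow> P x * Q v) * indicator A (?\<phi> p) \<partial>(S \<Otimes>\<^sub>M ?L))"
      by (simp add: emeasure_distr, subst emeasure_density)
        (auto intro!: nn_integral_cong split: split_indicator)
    also have "\<dots> = (\<integral>\<^sup>+x. \<integral>\<^sup>+v. P x * Q v * indicator A (?\<phi> (x, v)) \<partial>?L \<partial>S)"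
      by (subst L.nn_integral_fst[symmetric]) auto
    also have "\<dots> = (\<integral>\<^sup>+x. \<integral>\<^sup>+u. K (x, u) * indicator A u \<partial>?L \<partial>S)"
      by (rule nn_integral_cong) (rule fibre[OF _ A])
    also have "\<dots> = (\<integral>\<^sup>+u. \<integral>\<^sup>+x. K (x, u) * indicator A u \<partial>S \<partial>?L)"
      by (rule SL.Fubini'[symmetric]) measurable
    also have "\<dots> = (\<integral>\<^sup>+u. ?G u * indicator A u \<partial>?L)"
    proof (rule nn_integral_cong)
      fix u assume "u \<in> space ?L"
      then have "(\<lambda>x. K (x, u)) \<in> borel_measurable S"
        by measurable
      then show "(\<integral>\<^sup>+x. K (x, u) * indicator A u \<partial>S) = ?G u * indicator A u"
        by (simp add: nn_integral_multc K_def)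
    qed
    also have "\<dots> = emeasure (density ?L ?G) A"
      by (simp add: emeasure_density)
    finally show "emeasure (distr ?D ?L ?\<phi>) A = emeasure (density ?L ?G) A" .
  qed simp
qed

text \<open>\<open>indep_var\<close> forces \<open>X\<close> and \<open>V\<close> to have the same value type.\<close>

lemma (in prob_space) distributed_indep_quotient:
  fixes X V :: "'a \<Rightarrow> 'i \<Rightarrow> real" and Y :: "('i \<Rightarrow> real) \<Rightarrow> 'i \<Rightarrow> real"
  assumes "finite I" and "sigma_finite_measure S"
    and X: "distributed M S X P" and V: "distributed M (PiM I (\<lambda>_. lborel)) V Q"
    and indep: "indep_var S X (PiM I (\<lambda>_. lborel)) V"
    and Y: "\<And>i. i \<in> I \<Longrightarrow> (\<lambda>x. Y x i) \<in> borel_measurable S"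
    and Y_pos: "\<And>x i. x \<in> space S \<Longrightarrow> P x \<noteq> 0 \<Longrightarrow> i \<in> I \<Longrightarrow> 0 < Y x i"
  shows "distributed M (PiM I (\<lambda>_. lborel)) (\<lambda>\<omega>. restrict (\<lambda>i. V \<omega> i / Y (X \<omega>) i) I)
           (\<lambda>u. \<integral>\<^sup>+x. P x * ennreal (\<Prod>i\<in>I. Y x i) * Q (restrict (\<lambda>i. Y x i * u i) I) \<partial>S)"
    (is "distributed M ?L _ ?G")
proof -
  interpret PS: product_sigma_finite "\<lambda>_. lborel :: real measure" by standard
  have L: "sigma_finite_measure ?L"
    using \<open>finite I\<close> by (rule PS.sigma_finite)
  define \<phi> where "\<phi> = (\<lambda>(x, v). restrict (\<lambda>i. v i / Y x i) I)"
  have PQ [measurable]: "P \<in> borel_measurable S" "Q \<in> borel_measurable ?L"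
    using X V by (simp_all add: distributed_borel_measurable)
  have [measurable]: "\<phi> \<in> measurable (S \<Otimes>\<^sub>M ?L) ?L"
    using measurable_restrict_divide[OF Y] by (simp add: \<phi>_def case_prod_beta')
  have XV: "distributed M (S \<Otimes>\<^sub>M ?L) (\<lambda>\<omega>. (X \<omega>, V \<omega>)) (\<lambda>(x, v). P x * Q v)"
    using assms(2) L X V indep by (rule distributed_joint_indep)
  then have [measurable]: "(\<lambda>\<omega>. (X \<omega>, V \<omega>)) \<in> measurable M (S \<Otimes>\<^sub>M ?L)"
    by (rule distributed_measurable)
  have "distr M ?L (\<lambda>\<omega>. \<phi> (X \<omega>, V \<omega>)) = distr (density (S \<Otimes>\<^sub>M ?L) (\<lambda>(x, v). P x * Q v)) ?L \<phi>"
    using distr_distr[of \<phi> "S \<Otimes>\<^sub>M ?L" ?L "\<lambda>\<omega>. (X \<omega>, V \<omega>)" M]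
    by (simp add: comp_def distributed_distr_eq_density[OF XV])
  also have "\<dots> = density ?L ?G"
    unfolding \<phi>_def using assms(1,2) Y Y_pos by (intro distr_density_quotient) measurable
  moreover have "?G \<in> borel_measurable ?L"
    using borel_measurable_quotient_density(2)[OF assms(2) PQ Y] .
  moreover have "(\<lambda>\<omega>. \<phi> (X \<omega>, V \<omega>)) \<in> measurable M ?L"
    by measurable
  ultimately show ?thesis
    by (simp add: distributed_def \<phi>_def)
qed

section \<open>Stick-breaking for the Dirichlet distribution\<close>

definition beta_kernel :: "real \<Rightarrow> real \<Rightarrow> real \<Rightarrow> real" where
  "beta_kernel a b t = (if 0 < t \<and> t < 1 then t powr (a - 1) * (1 - t) powr (b - 1) else 0)"

definition dirichlet_kernel :: "nat \<Rightarrow> (nat \<Rightarrow> real) \<Rightarrow> (nat \<Rightarrow> real) \<Rightarrow> real" where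
  "dirichlet_kernel k \<alpha> x =
     (if (\<forall>j\<in>{1..k}. 0 < x j) \<and> (\<Sum>j=1..k. x j) < 1
      then (\<Prod>j=1..k. x j powr (\<alpha> j - 1)) * (1 - (\<Sum>j=1..k. x j)) powr (\<alpha> (k + 1) - 1)
      else 0)"

lemma beta_kernel_nonneg: "0 \<le> beta_kernel a b t"
  by (simp add: beta_kernel_def)

lemma dirichlet_kernel_nonneg: "0 \<le> dirichlet_kernel k \<alpha> x"
  by (auto simp: dirichlet_kernel_def intro!: prod_nonneg mult_nonneg_nonneg)

lemma beta_kernel_measurable [measurable]: "beta_kernel a b \<in> borel_measurable borel"
  unfolding beta_kernel_def by measurable

lemma dirichlet_kernel_measurable [measurable]: "dirichlet_kernel k \<alpha> \<in> borel_measurable (lebk k)"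
  unfolding dirichlet_kernel_def by measurable

lemma dir_y_measurable [measurable]:
  "j \<in> {1..k} \<Longrightarrow> (\<lambda>x. dir_y x j) \<in> borel_measurable (lebk k)"
  unfolding dir_y_def by measurable

lemma restrict_dir_y_measurable [measurable]:
  "(\<lambda>x. restrict (dir_y x) {1..k}) \<in> measurable (lebk k) (lebk k)"
proof (rule measurable_restrict)
  fix j assume "j \<in> {1..k}"
  note dir_y_measurable[OF this, measurable]
  show "(\<lambda>x. dir_y x j) \<in> measurable (lebk k) lborel"
    by measurable
qed

lemma dir_y_scale_measurable [measurable]:
  "(\<lambda>x. restrict (\<lambda>j. dir_y x j * u j) {1..k}) \<in> measurable (lebk k) (lebk k)"
proof (rule measurable_restrict)
  fix j assume "j \<in> {1..k}"
  note dir_y_measurable[OF this, measurable]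
  show "(\<lambda>x. dir_y x j * u j) \<in> measurable (lebk k) lborel"
    by measurable
qed

lemma dir_y_pos:
  assumes "\<forall>j\<in>{1..k}. 0 < x j" and "(\<Sum>j=1..k. x j) < 1" and "j \<in> {1..k}"
  shows "0 < dir_y x j"
proof -
  have "(\<Sum>i\<in>{1..<j}. x i) \<le> (\<Sum>j=1..k. x j)"
    using assms by (intro sum_mono2) (auto simp: less_imp_le)
  then show ?thesis
    using assms unfolding dir_y_def by (intro divide_pos_pos) auto
qed

lemma dir_y_fun_upd_last:
  "restrict (dir_y (x(Suc k := t))) {1..Suc k}
     = (restrict (dir_y x) {1..k})(Suc k := t / (1 - (\<Sum>j=1..k. x j)))"
proof
  fix j
  have "(\<Sum>i\<in>{1..<j}. (x(Suc k := t)) i) = (\<Sum>i\<in>{1..<j}. x i)" if "j \<le> Suc k"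
    using that by (intro sum.cong) auto
  then show "restrict (dir_y (x(Suc k := t))) {1..Suc k} j
      = ((restrict (dir_y x) {1..k})(Suc k := t / (1 - (\<Sum>j=1..k. x j)))) j"
    by (cases "j = Suc k") (auto simp: dir_y_def atLeastLessThanSuc_atLeastAtMost)
qed

lemma dir_beta_merge_last:
  assumes "j \<in> {1..k}"
  shows "dir_beta k (\<alpha>(Suc k := \<alpha> (Suc k) + \<alpha> (Suc (Suc k)))) j = dir_beta (Suc k) \<alpha> j"
proof -
  have "(\<Sum>i=j+1..k. (\<alpha>(Suc k := \<alpha> (Suc k) + \<alpha> (Suc (Suc k)))) i) = (\<Sum>i=j+1..k. \<alpha> i)"
    by (rule sum.cong) auto
  then show ?thesis
    using assms by (simp add: dir_beta_def sum.cl_ivl_Suc)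
qed

lemma dirichlet_kernel_fun_upd_last:
  "dirichlet_kernel (Suc k) \<alpha> (x(Suc k := t))
     = (if (\<forall>j\<in>{1..k}. 0 < x j) \<and> 0 < t \<and> (\<Sum>j=1..k. x j) + t < 1
        then (\<Prod>j=1..k. x j powr (\<alpha> j - 1)) * t powr (\<alpha> (Suc k) - 1)
             * (1 - ((\<Sum>j=1..k. x j) + t)) powr (\<alpha> (Suc (Suc k)) - 1)
        else 0)"
proof -
  have "(\<Sum>j=1..k. (x(Suc k := t)) j) = (\<Sum>j=1..k. x j)"
    by (rule sum.cong) auto
  moreover have "(\<Prod>j=1..k. (x(Suc k := t)) j powr (\<alpha> j - 1)) = (\<Prod>j=1..k. x j powr (\<alpha> j - 1))"
    by (rule prod.cong) auto
  moreover have "(\<forall>j\<in>{1..Suc k}. 0 < (x(Suc k := t)) j) \<longleftrightarrow> (\<forall>j\<in>{1..k}. 0 < x j) \<and> 0 < t"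
    by (auto simp: atLeastAtMostSuc_conv)
  ultimately show ?thesis
    unfolding dirichlet_kernel_def by simp
qed

lemma powr_beta_substitution:
  fixes a b c s :: real
  assumes "0 < c" and "0 < s" and "s < 1"
  shows "c * ((c * s) powr (a - 1) * (c * (1 - s)) powr (b - 1))
       = c powr (a + b - 1) * (s powr (a - 1) * (1 - s) powr (b - 1))"
proof -
  have "c powr (a + b - 1) = c powr (1 + (a - 1) + (b - 1))"
    by (rule arg_cong[where f = "(powr) c"]) simp
  also have "\<dots> = c * c powr (a - 1) * c powr (b - 1)"
    by (subst powr_add, subst powr_add) (use assms in simp)
  finally show ?thesis
    using assms by (simp add: powr_mult)
qed

lemma dirichlet_kernel_fun_upd_scaled:
  fixes k :: nat and x :: "nat \<Rightarrow> real"
  defines "c \<equiv> 1 - (\<Sum>j=1..k. x j)"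
  assumes x: "\<forall>j\<in>{1..k}. 0 < x j" and c: "0 < c"
  shows "c * dirichlet_kernel (Suc k) \<alpha> (x(Suc k := c * s))
       = dirichlet_kernel k (\<alpha>(Suc k := \<alpha> (Suc k) + \<alpha> (Suc (Suc k)))) x
         * beta_kernel (\<alpha> (Suc k)) (\<alpha> (Suc (Suc k))) s"
proof -
  define P where "P = (\<Prod>j=1..k. x j powr (\<alpha> j - 1))"
  have sum_x: "(\<Sum>j=1..k. x j) = 1 - c"
    by (simp add: c_def)
  have "(\<Sum>j=1..k. x j) + c * s < 1 \<longleftrightarrow> s < 1"
    unfolding sum_x using mult_less_cancel_left_pos[OF c, of s 1] by simp
  moreover have "1 - ((\<Sum>j=1..k. x j) + c * s) = c * (1 - s)"
    unfolding sum_x by (simp add: algebra_simps)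
  ultimately have upd: "dirichlet_kernel (Suc k) \<alpha> (x(Suc k := c * s))
      = (if 0 < s \<and> s < 1 then P * (c * s) powr (\<alpha> (Suc k) - 1) * (c * (1 - s)) powr (\<alpha> (Suc (Suc k)) - 1) else 0)"
    unfolding dirichlet_kernel_fun_upd_last P_def using x c by (simp add: zero_less_mult_iff)
  have "(\<Prod>j=1..k. x j powr ((\<alpha>(Suc k := \<alpha> (Suc k) + \<alpha> (Suc (Suc k)))) j - 1)) = P"
    unfolding P_def by (rule prod.cong) auto
  then have merged: "dirichlet_kernel k (\<alpha>(Suc k := \<alpha> (Suc k) + \<alpha> (Suc (Suc k)))) x
      = P * c powr (\<alpha> (Suc k) + \<alpha> (Suc (Suc k)) - 1)"
    using x c unfolding dirichlet_kernel_def sum_x by simp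
  show ?thesis
  proof (cases "0 < s \<and> s < 1")
    case True
    then show ?thesis
      unfolding upd merged beta_kernel_def
      using powr_beta_substitution[where a = "\<alpha> (Suc k)" and b = "\<alpha> (Suc (Suc k))" and s = s, OF c]
      by (simp add: mult_ac)
  qed (auto simp: upd beta_kernel_def)
qed

lemma lebk_Suc: "lebk (Suc k) = PiM (insert (Suc k) {1..k}) (\<lambda>_. lborel)"
  by (simp add: atLeastAtMostSuc_conv)

lemma measurable_fun_upd_last:
  "x \<in> space (lebk k) \<Longrightarrow> (\<lambda>t. x(Suc k := t)) \<in> measurable borel (lebk (Suc k))"
  unfolding lebk_Suc by (subst measurable_lborel2[symmetric]) simp

lemma measurable_fun_upd_last_pair:
  "(\<lambda>(x, t). x(Suc k := t)) \<in> measurable (lebk k \<Otimes>\<^sub>M lborel) (lebk (Suc k))"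
  unfolding lebk_Suc by (rule measurable_add_dim)

lemma nn_integral_lebk_Suc:
  assumes "H \<in> borel_measurable (lebk (Suc k))"
  shows "(\<integral>\<^sup>+x. H x \<partial>lebk (Suc k)) = (\<integral>\<^sup>+x. \<integral>\<^sup>+t. H (x(Suc k := t)) \<partial>lborel \<partial>lebk k)"
proof -
  interpret product_sigma_finite "\<lambda>_. lborel :: real measure" by standard
  show ?thesis
    using assms unfolding lebk_Suc by (intro product_nn_integral_insert) auto
qed

lemma nn_integral_dirichlet_kernel_last:
  fixes H :: "real \<Rightarrow> ennreal"
  assumes x: "\<forall>j\<in>{1..k}. 0 < x j" "(\<Sum>j=1..k. x j) < 1"
    and [measurable]: "H \<in> borel_measurable borel"
  shows "(\<integral>\<^sup>+t. ennreal (dirichlet_kernel (Suc k) \<alpha> (x(Suc k := t))) * H (t / (1 - (\<Sum>j=1..k. x j))) \<partial>lborel)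
       = ennreal (dirichlet_kernel k (\<alpha>(Suc k := \<alpha> (Suc k) + \<alpha> (Suc (Suc k)))) x)
         * (\<integral>\<^sup>+s. ennreal (beta_kernel (\<alpha> (Suc k)) (\<alpha> (Suc (Suc k))) s) * H s \<partial>lborel)"
proof -
  define c where "c = 1 - (\<Sum>j=1..k. x j)"
  have c: "0 < c"
    using x by (simp add: c_def)
  have [measurable]: "(\<lambda>t. dirichlet_kernel (Suc k) \<alpha> (x(Suc k := t))) \<in> borel_measurable borel"
    unfolding dirichlet_kernel_fun_upd_last by measurable
  have scaled: "c * dirichlet_kernel (Suc k) \<alpha> (x(Suc k := c * s))
      = dirichlet_kernel k (\<alpha>(Suc k := \<alpha> (Suc k) + \<alpha> (Suc (Suc k)))) x
        * beta_kernel (\<alpha> (Suc k)) (\<alpha> (Suc (Suc k))) s" for s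
    unfolding c_def by (rule dirichlet_kernel_fun_upd_scaled) (use x in auto)
  have "(\<integral>\<^sup>+t. ennreal (dirichlet_kernel (Suc k) \<alpha> (x(Suc k := t))) * H (t / c) \<partial>lborel)
      = ennreal c * (\<integral>\<^sup>+s. ennreal (dirichlet_kernel (Suc k) \<alpha> (x(Suc k := c * s))) * H (c * s / c) \<partial>lborel)"
    using c by (subst nn_integral_real_affine[where c = c and t = 0]) auto
  also have "\<dots> = (\<integral>\<^sup>+s. ennreal (c * dirichlet_kernel (Suc k) \<alpha> (x(Suc k := c * s))) * H s \<partial>lborel)"
    using c by (subst nn_integral_cmult[symmetric])
      (auto simp: ennreal_mult dirichlet_kernel_nonneg mult.assoc)
  also have "\<dots> = (\<integral>\<^sup>+s. ennreal (dirichlet_kernel k (\<alpha>(Suc k := \<alpha> (Suc k) + \<alpha> (Suc (Suc k)))) x)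
      * (ennreal (beta_kernel (\<alpha> (Suc k)) (\<alpha> (Suc (Suc k))) s) * H s) \<partial>lborel)"
    by (simp only: scaled ennreal_mult[OF dirichlet_kernel_nonneg beta_kernel_nonneg] mult.assoc)
  also have "\<dots> = ennreal (dirichlet_kernel k (\<alpha>(Suc k := \<alpha> (Suc k) + \<alpha> (Suc (Suc k)))) x)
      * (\<integral>\<^sup>+s. ennreal (beta_kernel (\<alpha> (Suc k)) (\<alpha> (Suc (Suc k))) s) * H s \<partial>lborel)"
    by (rule nn_integral_cmult) measurable
  finally show ?thesis
    by (simp only: c_def)
qed

lemma nn_integral_dirichlet_kernel_dir_y_last:
  fixes H :: "(nat \<Rightarrow> real) \<Rightarrow> ennreal"
  assumes "H \<in> borel_measurable (lebk (Suc k))"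
  shows "(\<integral>\<^sup>+t. ennreal (dirichlet_kernel (Suc k) \<alpha> (x(Suc k := t)))
            * H (restrict (dir_y (x(Suc k := t))) {1..Suc k}) \<partial>lborel)
       = ennreal (dirichlet_kernel k (\<alpha>(Suc k := \<alpha> (Suc k) + \<alpha> (Suc (Suc k)))) x)
         * (\<integral>\<^sup>+s. ennreal (beta_kernel (\<alpha> (Suc k)) (\<alpha> (Suc (Suc k))) s)
            * H ((restrict (dir_y x) {1..k})(Suc k := s)) \<partial>lborel)"
proof (cases "(\<forall>j\<in>{1..k}. 0 < x j) \<and> (\<Sum>j=1..k. x j) < 1")
  case True
  have "restrict (dir_y x) {1..k} \<in> space (lebk k)"
    by (simp add: space_PiM)
  from measurable_compose[OF measurable_fun_upd_last[OF this] assms(1)] show ?thesis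
    unfolding dir_y_fun_upd_last using True by (intro nn_integral_dirichlet_kernel_last) auto
next
  case False
  then have "dirichlet_kernel (Suc k) \<alpha> (x(Suc k := t)) = 0" for t
    by (auto simp: dirichlet_kernel_fun_upd_last)
  moreover from False have "dirichlet_kernel k (\<alpha>(Suc k := \<alpha> (Suc k) + \<alpha> (Suc (Suc k)))) x = 0"
    unfolding dirichlet_kernel_def by (rule if_not_P)
  ultimately show ?thesis
    by simp
qed

lemma prod_beta_kernel_dir_beta_Suc:
  "(\<Prod>j=1..k. beta_kernel ((\<alpha>(Suc k := \<alpha> (Suc k) + \<alpha> (Suc (Suc k)))) j)
       (dir_beta k (\<alpha>(Suc k := \<alpha> (Suc k) + \<alpha> (Suc (Suc k)))) j) (y j))
     * beta_kernel (\<alpha> (Suc k)) (\<alpha> (Suc (Suc k))) s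
   = (\<Prod>j=1..Suc k. beta_kernel (\<alpha> j) (dir_beta (Suc k) \<alpha> j) ((y(Suc k := s)) j))"
proof -
  have "(\<Prod>j=1..k. beta_kernel ((\<alpha>(Suc k := \<alpha> (Suc k) + \<alpha> (Suc (Suc k)))) j)
         (dir_beta k (\<alpha>(Suc k := \<alpha> (Suc k) + \<alpha> (Suc (Suc k)))) j) (y j))
      = (\<Prod>j=1..k. beta_kernel (\<alpha> j) (dir_beta (Suc k) \<alpha> j) ((y(Suc k := s)) j))"
    by (rule prod.cong) (auto simp: dir_beta_merge_last)
  moreover have "dir_beta (Suc k) \<alpha> (Suc k) = \<alpha> (Suc (Suc k))"
    by (simp add: dir_beta_def)
  ultimately show ?thesis
    by simp
qed

lemma nn_integral_dirichlet_kernel_dir_y: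
  fixes H :: "(nat \<Rightarrow> real) \<Rightarrow> ennreal"
  assumes "H \<in> borel_measurable (lebk k)"
  shows "(\<integral>\<^sup>+x. ennreal (dirichlet_kernel k \<alpha> x) * H (restrict (dir_y x) {1..k}) \<partial>lebk k)
       = (\<integral>\<^sup>+y. ennreal (\<Prod>j=1..k. beta_kernel (\<alpha> j) (dir_beta k \<alpha> j) (y j)) * H y \<partial>lebk k)"
  using assms
proof (induction k arbitrary: \<alpha> H)
  case 0
  have "restrict (dir_y x) {} = x" if "x \<in> {\<lambda>_. undefined}" for x
    using that by auto
  then show ?case
    by (simp add: PiM_empty nn_integral_count_space_finite dirichlet_kernel_def)
next
  case (Suc k)
  note [measurable] = Suc.prems
  define \<alpha>' where "\<alpha>' = \<alpha>(Suc k := \<alpha> (Suc k) + \<alpha> (Suc (Suc k)))"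
  define H' where "H' y = (\<integral>\<^sup>+s. ennreal (beta_kernel (\<alpha> (Suc k)) (\<alpha> (Suc (Suc k))) s)
    * H (y(Suc k := s)) \<partial>lborel)" for y
  have [measurable]: "(\<lambda>(y, s). H (y(Suc k := s))) \<in> borel_measurable (lebk k \<Otimes>\<^sub>M lborel)"
    using measurable_compose[OF measurable_fun_upd_last_pair Suc.prems] by (simp add: case_prod_beta' fun_upd_def)
  then have [measurable]: "H' \<in> borel_measurable (lebk k)"
    unfolding H'_def[abs_def] by (intro lborel.borel_measurable_nn_integral) measurable
  have "(\<integral>\<^sup>+x. ennreal (dirichlet_kernel (Suc k) \<alpha> x) * H (restrict (dir_y x) {1..Suc k}) \<partial>lebk (Suc k))
      = (\<integral>\<^sup>+x. \<integral>\<^sup>+t. ennreal (dirichlet_kernel (Suc k) \<alpha> (x(Suc k := t)))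
          * H (restrict (dir_y (x(Suc k := t))) {1..Suc k}) \<partial>lborel \<partial>lebk k)"
    by (rule nn_integral_lebk_Suc) measurable
  also have "\<dots> = (\<integral>\<^sup>+x. ennreal (dirichlet_kernel k \<alpha>' x) * H' (restrict (dir_y x) {1..k}) \<partial>lebk k)"
    unfolding H'_def \<alpha>'_def
    by (intro nn_integral_cong nn_integral_dirichlet_kernel_dir_y_last Suc.prems)
  also have "\<dots> = (\<integral>\<^sup>+y. ennreal (\<Prod>j=1..k. beta_kernel (\<alpha>' j) (dir_beta k \<alpha>' j) (y j)) * H' y \<partial>lebk k)"
    by (rule Suc.IH) measurable
  also have "\<dots> = (\<integral>\<^sup>+y. \<integral>\<^sup>+s. ennreal (\<Prod>j=1..Suc k. beta_kernel (\<alpha> j) (dir_beta (Suc k) \<alpha> j) ((y(Suc k := s)) j))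
      * H (y(Suc k := s)) \<partial>lborel \<partial>lebk k)"
  proof (rule nn_integral_cong)
    fix y assume "y \<in> space (lebk k)"
    note measurable_compose[OF measurable_fun_upd_last[OF this] Suc.prems, measurable]
    show "ennreal (\<Prod>j=1..k. beta_kernel (\<alpha>' j) (dir_beta k \<alpha>' j) (y j)) * H' y
        = (\<integral>\<^sup>+s. ennreal (\<Prod>j=1..Suc k. beta_kernel (\<alpha> j) (dir_beta (Suc k) \<alpha> j) ((y(Suc k := s)) j))
          * H (y(Suc k := s)) \<partial>lborel)"
      unfolding H'_def \<alpha>'_def prod_beta_kernel_dir_beta_Suc[symmetric]
      by (subst nn_integral_cmult[symmetric], measurable)
        (simp add: ennreal_mult prod_nonneg beta_kernel_nonneg mult.assoc)
  qed
  also have "\<dots> = (\<integral>\<^sup>+y. ennreal (\<Prod>j=1..Suc k. beta_kernel (\<alpha> j) (dir_beta (Suc k) \<alpha> j) (y j)) * H y \<partial>lebk (Suc k))"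
    by (rule nn_integral_lebk_Suc[symmetric]) measurable
  finally show ?case .
qed

section \<open>The Kober integral of a Dirichlet mixture\<close>

lemma beta_kernel_rescaled:
  fixes a b u v :: real
  assumes "0 < u"
  shows "beta_kernel a b (v / u) * (v / u) / u
       = (if 0 < v \<and> v < u then u powr (- a - b) * ((u - v) powr (b - 1) * v powr a) else 0)"
proof (cases "0 < v \<and> v < u")
  case True
  have "1 - v / u = (u - v) / u"
    using assms by (simp add: field_simps)
  then have "beta_kernel a b (v / u) * (v / u) / u
      = (v powr (a - 1) * v) * (u - v) powr (b - 1) / (u powr (a - 1) * u powr (b - 1) * u * u)"
    using True assms by (simp add: beta_kernel_def powr_divide field_simps)
  also have "v powr (a - 1) * v = v powr a"
    using True by (simp add: powr_diff)
  also have "u powr (a - 1) * u powr (b - 1) * u * u = u powr (a + b)"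
    using assms by (simp add: powr_diff powr_add field_simps)
  also have "v powr a * (u - v) powr (b - 1) / u powr (a + b) = u powr (- a - b) * ((u - v) powr (b - 1) * v powr a)"
    using powr_minus[of u "a + b"] by (simp add: divide_inverse mult_ac)
  finally show ?thesis
    using True by simp
next
  case False
  then have "\<not> (0 < v / u \<and> v / u < 1)"
    using assms by (auto simp: divide_less_eq zero_less_divide_iff)
  then have "beta_kernel a b (v / u) = 0"
    unfolding beta_kernel_def by (rule if_not_P)
  with False show ?thesis
    by simp
qed

lemma prod_beta_kernel_rescaled:
  assumes "finite J" and "\<forall>j\<in>J. 0 < u j"
  shows "(\<Prod>j\<in>J. beta_kernel (a j) (b j) (v j / u j) * (v j / u j) / u j)
       = (if \<forall>j\<in>J. 0 < v j \<and> v j < u j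
          then (\<Prod>j\<in>J. u j powr (- a j - b j)) * (\<Prod>j\<in>J. (u j - v j) powr (b j - 1) * v j powr a j)
          else 0)"
proof -
  have "(\<Prod>j\<in>J. beta_kernel (a j) (b j) (v j / u j) * (v j / u j) / u j)
      = (\<Prod>j\<in>J. if 0 < v j \<and> v j < u j then u j powr (- a j - b j) * ((u j - v j) powr (b j - 1) * v j powr a j) else 0)"
    using assms(2) by (intro prod.cong refl beta_kernel_rescaled) auto
  then show ?thesis
    using assms(1) by (auto simp: prod.distrib intro: prod_zero)
qed

lemma dirichlet_quotient_integrand_rescaled:
  fixes f :: "(nat \<Rightarrow> real) \<Rightarrow> real" and \<beta> :: "nat \<Rightarrow> real"
  assumes u: "\<forall>j\<in>{1..k}. 0 < u j" and v: "v \<in> space (lebk k)"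
  defines "w \<equiv> \<lambda>j\<in>{1..k}. 1 / u j * v j"
  shows "(\<Prod>j=1..k. 1 / u j) * ((\<Prod>j=1..k. beta_kernel (\<alpha> j) (\<beta> j) (w j))
           * ((\<Prod>j=1..k. w j) * f (restrict (\<lambda>j. w j * u j) {1..k})))
       = (\<Prod>j=1..k. u j powr (- \<alpha> j - \<beta> j))
         * (indicator {v \<in> space (lebk k). \<forall>j\<in>{1..k}. 0 < v j \<and> v j < u j} v
            * ((\<Prod>j=1..k. (u j - v j) powr (\<beta> j - 1) * v j powr \<alpha> j) * f v))"
proof -
  have "restrict (\<lambda>j. w j * u j) {1..k} = v"
  proof
    fix j show "restrict (\<lambda>j. w j * u j) {1..k} j = v j"
      using v u by (cases "j \<in> {1..k}") (force simp: w_def space_PiM PiE_def extensional_def)+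
  qed
  moreover have "(\<Prod>j=1..k. w j) = (\<Prod>j=1..k. v j / u j)"
    and "(\<Prod>j=1..k. beta_kernel (\<alpha> j) (\<beta> j) (w j)) = (\<Prod>j=1..k. beta_kernel (\<alpha> j) (\<beta> j) (v j / u j))"
    by (auto simp: w_def intro!: prod.cong)
  ultimately have "(\<Prod>j=1..k. 1 / u j) * ((\<Prod>j=1..k. beta_kernel (\<alpha> j) (\<beta> j) (w j))
        * ((\<Prod>j=1..k. w j) * f (restrict (\<lambda>j. w j * u j) {1..k})))
      = (\<Prod>j=1..k. beta_kernel (\<alpha> j) (\<beta> j) (v j / u j) * (v j / u j) / u j) * f v"
    by (simp add: prod.distrib prod_dividef)
  also have "\<dots> = (\<Prod>j=1..k. u j powr (- \<alpha> j - \<beta> j))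
      * (indicator {v \<in> space (lebk k). \<forall>j\<in>{1..k}. 0 < v j \<and> v j < u j} v
         * ((\<Prod>j=1..k. (u j - v j) powr (\<beta> j - 1) * v j powr \<alpha> j) * f v))"
    using v u by (subst prod_beta_kernel_rescaled) auto
  finally show ?thesis .
qed

lemma nn_integral_dirichlet_kernel_quotient:
  fixes f :: "(nat \<Rightarrow> real) \<Rightarrow> real"
  assumes u: "\<forall>j\<in>{1..k}. 0 < u j"
    and [measurable]: "f \<in> borel_measurable (lebk k)" and f_nonneg: "\<And>v. 0 \<le> f v"
  shows "(\<integral>\<^sup>+x. ennreal (dirichlet_kernel k \<alpha> x * (\<Prod>j=1..k. dir_y x j)
            * f (restrict (\<lambda>j. dir_y x j * u j) {1..k})) \<partial>lebk k)
       = ennreal (\<Prod>j=1..k. u j powr (- \<alpha> j - dir_beta k \<alpha> j))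
         * (\<integral>\<^sup>+v \<in> {v \<in> space (lebk k). \<forall>j\<in>{1..k}. 0 < v j \<and> v j < u j}.
              ennreal ((\<Prod>j=1..k. (u j - v j) powr (dir_beta k \<alpha> j - 1) * v j powr \<alpha> j) * f v) \<partial>lebk k)"
proof -
  define \<beta> where "\<beta> = dir_beta k \<alpha>"
  define S where "S = {v \<in> space (lebk k). \<forall>j\<in>{1..k}. 0 < v j \<and> v j < u j}"
  define K where "K v = (\<Prod>j=1..k. (u j - v j) powr (\<beta> j - 1) * v j powr \<alpha> j) * f v" for v
  define H where "H y = (\<Prod>j=1..k. y j) * f (restrict (\<lambda>j. y j * u j) {1..k})" for y
  define R where "R y = (\<Prod>j=1..k. beta_kernel (\<alpha> j) (\<beta> j) (y j)) * H y" for y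
  have [measurable]: "(\<lambda>y. restrict (\<lambda>j. y j * u j) {1..k}) \<in> measurable (lebk k) (lebk k)"
    "(\<lambda>v. \<lambda>j\<in>{1..k}. 1 / u j * v j) \<in> measurable (lebk k) (lebk k)"
    by (rule measurable_restrict, simp)+
  have [measurable]: "H \<in> borel_measurable (lebk k)" and R_measurable [measurable]: "R \<in> borel_measurable (lebk k)"
    and [measurable]: "S \<in> sets (lebk k)" "K \<in> borel_measurable (lebk k)"
    unfolding H_def[abs_def] R_def[abs_def] S_def K_def[abs_def] by measurable
  have K_nonneg: "0 \<le> K v" for v
    unfolding K_def using f_nonneg by (auto intro!: prod_nonneg mult_nonneg_nonneg)
  have inverse_nonneg: "0 \<le> (\<Prod>j=1..k. 1 / u j)"
    using u by (auto intro!: prod_nonneg)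
  have "(\<integral>\<^sup>+x. ennreal (dirichlet_kernel k \<alpha> x * (\<Prod>j=1..k. dir_y x j)
            * f (restrict (\<lambda>j. dir_y x j * u j) {1..k})) \<partial>lebk k)
      = (\<integral>\<^sup>+x. ennreal (dirichlet_kernel k \<alpha> x) * ennreal (H (restrict (dir_y x) {1..k})) \<partial>lebk k)"
  proof (rule nn_integral_cong)
    fix x
    have "restrict (\<lambda>j. restrict (dir_y x) {1..k} j * u j) {1..k} = restrict (\<lambda>j. dir_y x j * u j) {1..k}"
      by (rule restrict_ext) simp
    then show "ennreal (dirichlet_kernel k \<alpha> x * (\<Prod>j=1..k. dir_y x j) * f (restrict (\<lambda>j. dir_y x j * u j) {1..k}))
        = ennreal (dirichlet_kernel k \<alpha> x) * ennreal (H (restrict (dir_y x) {1..k}))"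
      by (simp add: H_def ennreal_mult' dirichlet_kernel_nonneg mult.assoc)
  qed
  also have "\<dots> = (\<integral>\<^sup>+y. ennreal (R y) \<partial>lebk k)"
    by (subst nn_integral_dirichlet_kernel_dir_y)
      (measurable, simp add: R_def \<beta>_def ennreal_mult' prod_nonneg beta_kernel_nonneg)
  also have "\<dots> = ennreal (\<Prod>j=1..k. 1 / u j) * (\<integral>\<^sup>+v. ennreal (R (\<lambda>j\<in>{1..k}. 1 / u j * v j)) \<partial>lebk k)"
    using u by (intro nn_integral_PiM_lborel_scale measurable_compose[OF R_measurable measurable_ennreal]) auto
  also have "\<dots> = (\<integral>\<^sup>+v. ennreal ((\<Prod>j=1..k. 1 / u j) * R (\<lambda>j\<in>{1..k}. 1 / u j * v j)) \<partial>lebk k)"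
    using u by (subst nn_integral_cmult[symmetric])
      (measurable, simp only: ennreal_mult'[OF inverse_nonneg])
  also have "\<dots> = (\<integral>\<^sup>+v. ennreal ((\<Prod>j=1..k. u j powr (- \<alpha> j - \<beta> j)) * (indicator S v * K v)) \<partial>lebk k)"
  proof (intro nn_integral_cong arg_cong[where f = ennreal])
    fix v assume "v \<in> space (lebk k)"
    then show "(\<Prod>j=1..k. 1 / u j) * R (\<lambda>j\<in>{1..k}. 1 / u j * v j)
        = (\<Prod>j=1..k. u j powr (- \<alpha> j - \<beta> j)) * (indicator S v * K v)"
      unfolding R_def H_def S_def K_def by (rule dirichlet_quotient_integrand_rescaled[OF u])
  qed
  also have "\<dots> = (\<integral>\<^sup>+v. ennreal (\<Prod>j=1..k. u j powr (- \<alpha> j - \<beta> j)) * (ennreal (K v) * indicator S v) \<partial>lebk k)"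
    using K_nonneg by (intro nn_integral_cong) (simp add: ennreal_mult' prod_nonneg split: split_indicator)
  also have "\<dots> = ennreal (\<Prod>j=1..k. u j powr (- \<alpha> j - \<beta> j)) * (\<integral>\<^sup>+v\<in>S. ennreal (K v) \<partial>lebk k)"
    by (rule nn_integral_cmult) measurable
  finally show ?thesis
    by (simp only: \<beta>_def S_def K_def)
qed

lemma kober1_dir_beta_eq_nn_integral:
  fixes f :: "(nat \<Rightarrow> real) \<Rightarrow> real"
  assumes u: "\<forall>j\<in>{1..k}. 0 < u j"
    and [measurable]: "f \<in> borel_measurable (lebk k)" and f_nonneg: "\<And>v. 0 \<le> f v"
  shows "kober1 k \<alpha> (dir_beta k \<alpha>) f u
       = (\<Prod>j=1..k. 1 / Gamma (dir_beta k \<alpha> j))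
         * enn2real (\<integral>\<^sup>+x. ennreal (dirichlet_kernel k \<alpha> x * (\<Prod>j=1..k. dir_y x j)
              * f (restrict (\<lambda>j. dir_y x j * u j) {1..k})) \<partial>lebk k)"
proof -
  define \<beta> where "\<beta> = dir_beta k \<alpha>"
  define S where "S = {v \<in> space (lebk k). \<forall>j\<in>{1..k}. 0 < v j \<and> v j < u j}"
  define K where "K v = (\<Prod>j=1..k. (u j - v j) powr (\<beta> j - 1) * v j powr \<alpha> j) * f v" for v
  have [measurable]: "S \<in> sets (lebk k)" "K \<in> borel_measurable (lebk k)"
    unfolding S_def K_def[abs_def] by measurable
  have K_nonneg: "0 \<le> K v" for v
    unfolding K_def using f_nonneg by (auto intro!: prod_nonneg mult_nonneg_nonneg)
  have set_integral: "set_lebesgue_integral (lebk k) S K = enn2real (\<integral>\<^sup>+v\<in>S. ennreal (K v) \<partial>lebk k)"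
    unfolding set_lebesgue_integral_def using K_nonneg
    by (subst integral_eq_nn_integral)
      (measurable, auto intro!: arg_cong[where f = enn2real] nn_integral_cong split: split_indicator)
  have "kober1 k \<alpha> \<beta> f u
      = (\<Prod>j=1..k. u j powr (- \<alpha> j - \<beta> j) / Gamma (\<beta> j)) * set_lebesgue_integral (lebk k) S K"
    unfolding kober1_def S_def K_def[abs_def] ..
  also have "\<dots> = (\<Prod>j=1..k. 1 / Gamma (\<beta> j))
      * enn2real (ennreal (\<Prod>j=1..k. u j powr (- \<alpha> j - \<beta> j)) * (\<integral>\<^sup>+v\<in>S. ennreal (K v) \<partial>lebk k))"
    unfolding set_integral using u by (simp add: enn2real_mult prod_nonneg prod_dividef)
  finally show ?thesis
    unfolding nn_integral_dirichlet_kernel_quotient[OF assms] \<beta>_def S_def K_def .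
qed

section \<open>Normalising constants\<close>

lemma prod_atLeastAtMost_shift_last:
  "(\<Prod>j=1..k. f j) * f (Suc k) = f 1 * (\<Prod>j=1..k. f (Suc j))"
proof -
  have "(\<Prod>j=1..k. f j) * f (Suc k) = (\<Prod>j=1..Suc k. f j)"
    by simp
  also have "\<dots> = f 1 * (\<Prod>j=Suc 1..Suc k. f j)"
    by (subst prod.atLeast_Suc_atMost) auto
  finally show ?thesis
    by (simp only: prod.shift_bounds_cl_Suc_ivl)
qed

lemma prod_Gamma_dir_beta:
  assumes "\<forall>j\<in>{1..k+1}. 0 < \<alpha> j"
  shows "(\<Prod>j=1..k. Gamma (\<alpha> j) / Gamma (\<alpha> j + dir_beta k \<alpha> j))
           * (Gamma (\<Sum>j=1..k+1. \<alpha> j) / (\<Prod>j=1..k+1. Gamma (\<alpha> j)))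
       = (\<Prod>j=1..k. 1 / Gamma (dir_beta k \<alpha> j))"
proof -
  define s where "s j = (\<Sum>i=j..k+1. \<alpha> i)" for j
  have Gamma_s: "Gamma (s j) \<noteq> 0" if "1 \<le> j" "j \<le> k + 1" for j
  proof -
    have "0 < s j"
      unfolding s_def using assms that by (intro sum_pos) auto
    from Gamma_real_pos[OF this] show ?thesis
      by simp
  qed
  have Gamma_\<alpha>: "Gamma (\<alpha> j) \<noteq> 0" if "j \<in> {1..k+1}" for j
    using Gamma_real_pos[of "\<alpha> j"] assms that by force
  have \<alpha>_plus_\<beta>: "\<alpha> j + dir_beta k \<alpha> j = s j" if "j \<in> {1..k}" for j
    using that unfolding s_def dir_beta_def by (simp add: sum.atLeast_Suc_atMost)
  have \<beta>_eq: "dir_beta k \<alpha> j = s (Suc j)" for j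
    unfolding s_def dir_beta_def by simp
  have telescope: "(\<Prod>j=1..k. Gamma (s j)) * Gamma (\<alpha> (k+1)) = Gamma (s 1) * (\<Prod>j=1..k. Gamma (s (Suc j)))"
    using prod_atLeastAtMost_shift_last[of "\<lambda>j. Gamma (s j)" k] by (simp add: s_def)
  define P\<alpha> Ps Ps' where "P\<alpha> = (\<Prod>j=1..k. Gamma (\<alpha> j))" and "Ps = (\<Prod>j=1..k. Gamma (s j))"
    and "Ps' = (\<Prod>j=1..k. Gamma (s (Suc j)))"
  have "(\<Prod>j=1..k. Gamma (\<alpha> j) / Gamma (\<alpha> j + dir_beta k \<alpha> j)) = P\<alpha> / Ps"
    unfolding P\<alpha>_def Ps_def prod_dividef[symmetric] by (rule prod.cong) (auto simp: \<alpha>_plus_\<beta>)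
  moreover have "(\<Prod>j=1..k. 1 / Gamma (dir_beta k \<alpha> j)) = 1 / Ps'"
    unfolding Ps'_def by (simp add: \<beta>_eq prod_dividef)
  moreover have "Gamma (\<Sum>j=1..k+1. \<alpha> j) / (\<Prod>j=1..k+1. Gamma (\<alpha> j)) = Gamma (s 1) / (P\<alpha> * Gamma (\<alpha> (k+1)))"
    by (simp add: s_def P\<alpha>_def)
  moreover have nonzero: "P\<alpha> \<noteq> 0" "Ps \<noteq> 0" "Ps' \<noteq> 0" "Gamma (\<alpha> (k+1)) \<noteq> 0" "Gamma (s 1) \<noteq> 0"
    unfolding P\<alpha>_def Ps_def Ps'_def using Gamma_\<alpha> Gamma_s by (auto simp: prod_zero_iff)
  ultimately have "?thesis \<longleftrightarrow> P\<alpha> / Ps * (Gamma (s 1) / (P\<alpha> * Gamma (\<alpha> (k+1)))) = 1 / Ps'"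
    by simp
  also have "\<dots> \<longleftrightarrow> Gamma (s 1) / (Ps * Gamma (\<alpha> (k+1))) = 1 / Ps'"
    using nonzero by (simp add: field_simps)
  finally show ?thesis
    using telescope[folded Ps_def Ps'_def] nonzero by simp
qed

lemma dirichlet1_density_eq_kernel:
  assumes "k \<ge> 1"
  shows "dirichlet1_density k \<alpha> x
       = Gamma (\<Sum>j=1..k+1. \<alpha> j) / (\<Prod>j=1..k+1. Gamma (\<alpha> j)) * dirichlet_kernel k \<alpha> x"
proof (cases "(\<forall>j\<in>{1..k}. 0 < x j) \<and> (\<Sum>j=1..k. x j) < 1")
  case True
  have "0 < (\<Sum>j=1..k. x j)"
    using True assms by (intro sum_pos) auto
  moreover have "x j < 1" if "j \<in> {1..k}" for j
  proof -
    have "x j \<le> (\<Sum>j=1..k. x j)"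
      using True that by (intro member_le_sum) (auto simp: less_imp_le)
    then show ?thesis
      using True by simp
  qed
  ultimately show ?thesis
    using True unfolding dirichlet1_density_def dirichlet_kernel_def by auto
qed (auto simp: dirichlet1_density_def dirichlet_kernel_def)

lemma kober1_dir_beta_eq_quotient_density:
  fixes f :: "(nat \<Rightarrow> real) \<Rightarrow> real"
  assumes "k \<ge> 1" and \<alpha>: "\<forall>j\<in>{1..k+1}. 0 < \<alpha> j" and u: "\<forall>j\<in>{1..k}. 0 < u j"
    and f_measurable [measurable]: "f \<in> borel_measurable (lebk k)" and f_nonneg: "\<And>v. 0 \<le> f v"
  shows "kober1 k \<alpha> (dir_beta k \<alpha>) f u
       = (\<Prod>j=1..k. Gamma (\<alpha> j) / Gamma (\<alpha> j + dir_beta k \<alpha> j))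
         * enn2real (\<integral>\<^sup>+x. ennreal (dirichlet1_density k \<alpha> x) * ennreal (\<Prod>j=1..k. dir_y x j)
             * ennreal (f (restrict (\<lambda>j. dir_y x j * u j) {1..k})) \<partial>lebk k)"
proof -
  define C where "C = Gamma (\<Sum>j=1..k+1. \<alpha> j) / (\<Prod>j=1..k+1. Gamma (\<alpha> j))"
  define E where "E = (\<integral>\<^sup>+x. ennreal (dirichlet_kernel k \<alpha> x * (\<Prod>j=1..k. dir_y x j)
      * f (restrict (\<lambda>j. dir_y x j * u j) {1..k})) \<partial>lebk k)"
  have C_pos: "0 < C"
    unfolding C_def using \<alpha> by (intro divide_pos_pos Gamma_real_pos prod_pos sum_pos) auto
  have "(\<integral>\<^sup>+x. ennreal (dirichlet1_density k \<alpha> x) * ennreal (\<Prod>j=1..k. dir_y x j)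
      * ennreal (f (restrict (\<lambda>j. dir_y x j * u j) {1..k})) \<partial>lebk k)
      = (\<integral>\<^sup>+x. ennreal C * ennreal (dirichlet_kernel k \<alpha> x * (\<Prod>j=1..k. dir_y x j)
          * f (restrict (\<lambda>j. dir_y x j * u j) {1..k})) \<partial>lebk k)"
    unfolding dirichlet1_density_eq_kernel[OF assms(1)] C_def[symmetric] using f_nonneg C_pos
    by (intro nn_integral_cong) (simp add: ennreal_mult' ennreal_mult'' dirichlet_kernel_nonneg mult.assoc)
  also have "\<dots> = ennreal C * E"
    unfolding E_def by (intro nn_integral_cmult) measurable
  finally have "enn2real (\<integral>\<^sup>+x. ennreal (dirichlet1_density k \<alpha> x) * ennreal (\<Prod>j=1..k. dir_y x j)
      * ennreal (f (restrict (\<lambda>j. dir_y x j * u j) {1..k})) \<partial>lebk k) = C * enn2real E"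
    using C_pos by (simp add: enn2real_mult)
  moreover have "kober1 k \<alpha> (dir_beta k \<alpha>) f u = (\<Prod>j=1..k. 1 / Gamma (dir_beta k \<alpha> j)) * enn2real E"
    unfolding E_def using u f_measurable f_nonneg by (rule kober1_dir_beta_eq_nn_integral)
  moreover have "(\<Prod>j=1..k. Gamma (\<alpha> j) / Gamma (\<alpha> j + dir_beta k \<alpha> j)) * C
      = (\<Prod>j=1..k. 1 / Gamma (dir_beta k \<alpha> j))"
    unfolding C_def using \<alpha> by (rule prod_Gamma_dir_beta)
  ultimately show ?thesis
    by (simp add: mult.assoc)
qed

lemma (in prob_space) distributed_dirichlet_quotient:
  assumes "distributed M (lebk k) X (\<lambda>x. ennreal (dirichlet1_density k \<alpha> x))"
    and "distributed M (lebk k) V (\<lambda>v. ennreal (f v))"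
    and "indep_var (lebk k) X (lebk k) V"
  shows "distributed M (lebk k) (\<lambda>\<omega>. restrict (\<lambda>j. V \<omega> j / dir_y (X \<omega>) j) {1..k})
           (\<lambda>u. \<integral>\<^sup>+x. ennreal (dirichlet1_density k \<alpha> x) * ennreal (\<Prod>j=1..k. dir_y x j)
                  * ennreal (f (restrict (\<lambda>j. dir_y x j * u j) {1..k})) \<partial>lebk k)"
proof -
  interpret product_sigma_finite "\<lambda>_. lborel :: real measure" by standard
  show ?thesis
  proof (rule distributed_indep_quotient[OF _ sigma_finite assms])
    fix x j assume "ennreal (dirichlet1_density k \<alpha> x) \<noteq> 0" and j: "j \<in> {1..k}"
    then have "(\<forall>j\<in>{1..k}. 0 < x j) \<and> (\<Sum>j=1..k. x j) < 1"
      by (auto simp: dirichlet1_density_def split: if_splits)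
    then show "0 < dir_y x j"
      using j by (intro dir_y_pos) auto
  qed (use dir_y_measurable in auto)
qed

theorem theorem2p4:
  fixes M :: "'a measure" and k :: nat and \<alpha> :: "nat \<Rightarrow> real"
    and X V :: "'a \<Rightarrow> nat \<Rightarrow> real" and f g :: "(nat \<Rightarrow> real) \<Rightarrow> real"
  assumes "prob_space M"
    and "k \<ge> 1"
    and "\<forall>j\<in>{1..k+1}. \<alpha> j > 0"
    and "distributed M (lebk k) X (\<lambda>x. ennreal (dirichlet1_density k \<alpha> x))"
    and "\<forall>v. f v \<ge> 0"
    and "\<forall>v\<in>space (lebk k). (\<exists>j\<in>{1..k}. v j \<le> 0) \<longrightarrow> f v = 0"
    and "distributed M (lebk k) V (\<lambda>v. ennreal (f v))"
    and "prob_space.indep_var M (lebk k) X (lebk k) V"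
    and "\<forall>u. g u \<ge> 0"
    and "distributed M (lebk k)
           (\<lambda>\<omega>. restrict (\<lambda>j. V \<omega> j / dir_y (X \<omega>) j) {1..k}) (\<lambda>u. ennreal (g u))"
  shows "AE u in lebk k. (\<forall>j\<in>{1..k}. 0 < u j) \<longrightarrow>
           kober1 k \<alpha> (dir_beta k \<alpha>) f u
             = (\<Prod>j=1..k. Gamma (\<alpha> j) / Gamma (\<alpha> j + dir_beta k \<alpha> j)) * g u"
proof -
  interpret prob_space M by fact
  have f_measurable: "f \<in> borel_measurable (lebk k)"
    using assms(5,7) by (intro distributed_real_measurable) auto
  from distributed_unique[OF assms(10) distributed_dirichlet_quotient[OF assms(4,7,8)]]
  show ?thesis
  proof eventually_elim
    case (elim u)
    show ?case
    proof
      assume "\<forall>j\<in>{1..k}. 0 < u j"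
      from kober1_dir_beta_eq_quotient_density[OF assms(2,3) this f_measurable] assms(5,9)
      show "kober1 k \<alpha> (dir_beta k \<alpha>) f u
          = (\<Prod>j=1..k. Gamma (\<alpha> j) / Gamma (\<alpha> j + dir_beta k \<alpha> j)) * g u"
        unfolding elim[symmetric] by simp
    qed
  qed
qed

end
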